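(* Let $G$ be a connected graph in $\mathcal{C}$ and $C$ an induced $C_5$ in $G$. Then $R$ is a clique, and every vertex of $R$ is adjacent to every vertex of $X$.
   Context: $\mathcal{C}=\mathrm{Free}(\text{claw}, 4K_1, \text{5-wheel}, C_5\text{-twin}, P_5\text{-twin}, K_5-e)$, where $\mathrm{Free}(L)$ is the class of graphs with no induced subgraph isomorphic to a member of $L$; the claw is $K_{1,3}$; $4K_1$ is the edgeless graph on 4 vertices; the 5-wheel is $C_5$ plus a vertex adjacent to all five cycle vertices; the $C_5$-twin is $C_5$ plus a new vertex adjacent to one cycle vertex $v$ and both cycle-neighbours of $v$; the $P_5$-twin is a path $p_1p_2p_3p_4p_5$ plus a new vertex adjacent to exactly $p_2,p_3,p_4$; $K_5-e$ is $K_5$ minus one edge. Given an induced cycle $C$ of length 5 with vertices $0,\dots,4$ in cyclic order (indices taken mod 5): $R$ is the set of vertices outside $C$ with no neighbour in $C$; $X_j$ is the set of vertices outside $C$ whose neighbourhood in $C$ is exactly $\{j,j+1\}$; $Y_j$ is the set of vertices outside $C$ whose neighbourhood in $C$ is exactly $\{j,j+1,j+2,j+3\}$; $X=\bigcup_j X_j$, $Y=\bigcup_j Y_j$. *)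

theory Defs
  imports Main
begin

definition graph :: "'a set \<Rightarrow> ('a \<Rightarrow> 'a \<Rightarrow> bool) \<Rightarrow> bool" where
  "graph V E \<longleftrightarrow> finite V \<and> (\<forall>x y. E x y \<longrightarrow> x \<in> V \<and> y \<in> V)
     \<and> (\<forall>x y. E x y \<longrightarrow> E y x) \<and> (\<forall>x. \<not> E x x)"

definition connected_graph :: "'a set \<Rightarrow> ('a \<Rightarrow> 'a \<Rightarrow> bool) \<Rightarrow> bool" where
  "connected_graph V E \<longleftrightarrow> (\<forall>x\<in>V. \<forall>y\<in>V. E\<^sup>*\<^sup>* x y)"

definition edges_of :: "(nat \<times> nat) set \<Rightarrow> nat \<Rightarrow> nat \<Rightarrow> bool" where
  "edges_of S i j \<longleftrightarrow> (i, j) \<in> S \<or> (j, i) \<in> S"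

definition has_induced :: "'a set \<Rightarrow> ('a \<Rightarrow> 'a \<Rightarrow> bool) \<Rightarrow> nat \<Rightarrow> (nat \<Rightarrow> nat \<Rightarrow> bool) \<Rightarrow> bool" where
  "has_induced V E n h \<longleftrightarrow> (\<exists>f. inj_on f {0..<n} \<and> f ` {0..<n} \<subseteq> V \<and>
      (\<forall>i<n. \<forall>j<n. E (f i) (f j) \<longleftrightarrow> h i j))"

definition claw :: "nat \<Rightarrow> nat \<Rightarrow> bool" where
  "claw = edges_of {(0,1),(0,2),(0,3)}"
definition fourK1 :: "nat \<Rightarrow> nat \<Rightarrow> bool" where
  "fourK1 = edges_of {}"
definition wheel5 :: "nat \<Rightarrow> nat \<Rightarrow> bool" where
  "wheel5 = edges_of {(0,1),(1,2),(2,3),(3,4),(4,0),(5,0),(5,1),(5,2),(5,3),(5,4)}"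
definition C5_twin :: "nat \<Rightarrow> nat \<Rightarrow> bool" where
  "C5_twin = edges_of {(0,1),(1,2),(2,3),(3,4),(4,0),(5,4),(5,0),(5,1)}"
definition P5_twin :: "nat \<Rightarrow> nat \<Rightarrow> bool" where
  "P5_twin = edges_of {(0,1),(1,2),(2,3),(3,4),(5,1),(5,2),(5,3)}"
definition K5_minus_e :: "nat \<Rightarrow> nat \<Rightarrow> bool" where
  "K5_minus_e = edges_of {(0,2),(0,3),(0,4),(1,2),(1,3),(1,4),(2,3),(2,4),(3,4)}"

definition in_class_C :: "'a set \<Rightarrow> ('a \<Rightarrow> 'a \<Rightarrow> bool) \<Rightarrow> bool" where
  "in_class_C V E \<longleftrightarrow> graph V E \<and>
     \<not> has_induced V E 4 claw \<and> \<not> has_induced V E 4 fourK1 \<and>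
     \<not> has_induced V E 6 wheel5 \<and> \<not> has_induced V E 6 C5_twin \<and>
     \<not> has_induced V E 6 P5_twin \<and> \<not> has_induced V E 5 K5_minus_e"

definition induced_C5 :: "'a set \<Rightarrow> ('a \<Rightarrow> 'a \<Rightarrow> bool) \<Rightarrow> (nat \<Rightarrow> 'a) \<Rightarrow> bool" where
  "induced_C5 V E c \<longleftrightarrow> inj_on c {0..<5} \<and> c ` {0..<5} \<subseteq> V \<and>
     (\<forall>i<5. \<forall>j<5. E (c i) (c j) \<longleftrightarrow> (j = (i + 1) mod 5 \<or> i = (j + 1) mod 5))"

definition nbrs_on_C :: "('a \<Rightarrow> 'a \<Rightarrow> bool) \<Rightarrow> (nat \<Rightarrow> 'a) \<Rightarrow> 'a \<Rightarrow> nat set" where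
  "nbrs_on_C E c v = {i. i < 5 \<and> E v (c i)}"

definition R_set :: "'a set \<Rightarrow> ('a \<Rightarrow> 'a \<Rightarrow> bool) \<Rightarrow> (nat \<Rightarrow> 'a) \<Rightarrow> 'a set" where
  "R_set V E c = {v \<in> V - c ` {0..<5}. nbrs_on_C E c v = {}}"

definition X_j :: "'a set \<Rightarrow> ('a \<Rightarrow> 'a \<Rightarrow> bool) \<Rightarrow> (nat \<Rightarrow> 'a) \<Rightarrow> nat \<Rightarrow> 'a set" where
  "X_j V E c j = {v \<in> V - c ` {0..<5}. nbrs_on_C E c v = {j mod 5, (j + 1) mod 5}}"

definition X_set :: "'a set \<Rightarrow> ('a \<Rightarrow> 'a \<Rightarrow> bool) \<Rightarrow> (nat \<Rightarrow> 'a) \<Rightarrow> 'a set" where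
  "X_set V E c = (\<Union>j<5. X_j V E c j)"

end

theory Submission
  imports Defs
begin

lemma fourK1_free_adjacent:
  assumes g: "graph V E" and free: "\<not> has_induced V E 4 fourK1"
    and V: "a \<in> V" "b \<in> V" "p \<in> V" "q \<in> V"
    and dist: "a \<noteq> b" "a \<noteq> p" "a \<noteq> q" "b \<noteq> p" "b \<noteq> q" "p \<noteq> q"
    and nonadj: "\<not> E a p" "\<not> E a q" "\<not> E b p" "\<not> E b q" "\<not> E p q"
  shows "E a b"
proof (rule ccontr)
  assume "\<not> E a b"
  define f where "f = (\<lambda>i::nat. if i = 0 then a else if i = 1 then b else if i = 2 then p else q)"
  have sym: "\<And>x y. E x y \<Longrightarrow> E y x" and irrefl: "\<And>x. \<not> E x x"
    using g unfolding graph_def by blast+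
  have four: "{0..<4::nat} = {0, 1, 2, 3}" by auto
  have below4: "(\<forall>i<(4::nat). P i) \<longleftrightarrow> P 0 \<and> P 1 \<and> P 2 \<and> P 3" for P
    by (auto simp: less_Suc_eq numeral_eq_Suc)
  have "has_induced V E 4 fourK1"
    unfolding has_induced_def fourK1_def edges_of_def four below4
    using V dist nonadj \<open>\<not> E a b\<close> sym irrefl
    by (intro exI[of _ f]) (auto simp: f_def)
  with free show False ..
qed

lemma induced_C5_skip_two:
  assumes "induced_C5 V E c" "i < 5"
  shows "c i \<in> V" "c ((i + 2) mod 5) \<in> V" "c i \<noteq> c ((i + 2) mod 5)"
    and "\<not> E (c i) (c ((i + 2) mod 5))"
proof -
  have "i = 0 \<or> i = 1 \<or> i = 2 \<or> i = 3 \<or> i = 4" using \<open>i < 5\<close> by auto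
  then have "(i + 2) mod 5 < 5 \<and> i \<noteq> (i + 2) mod 5 \<and>
      \<not> ((i + 2) mod 5 = (i + 1) mod 5 \<or> i = ((i + 2) mod 5 + 1) mod 5)"
    by auto
  then show "c i \<in> V" "c ((i + 2) mod 5) \<in> V" "c i \<noteq> c ((i + 2) mod 5)"
    and "\<not> E (c i) (c ((i + 2) mod 5))"
    using assms unfolding induced_C5_def inj_on_def by auto
qed

lemma R_set_memD:
  assumes "u \<in> R_set V E c" "k < 5"
  shows "u \<in> V" "u \<noteq> c k" "\<not> E u (c k)"
  using assms unfolding R_set_def nbrs_on_C_def by auto

lemma X_j_memD:
  assumes "x \<in> X_j V E c j" "k < 5"
  shows "x \<in> V" "x \<noteq> c k" "E x (c k) \<longleftrightarrow> k = j mod 5 \<or> k = (j + 1) mod 5"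
  using assms unfolding X_j_def nbrs_on_C_def by auto

lemma R_set_clique:
  assumes g: "graph V E" and free: "\<not> has_induced V E 4 fourK1" and C5: "induced_C5 V E c"
    and u: "u \<in> R_set V E c" and w: "w \<in> R_set V E c" and "u \<noteq> w"
  shows "E u w"
proof -
  have two: "(0 + 2) mod 5 = (2::nat)" by simp
  show ?thesis
    using fourK1_free_adjacent[OF g free, of u w "c 0" "c 2"]
      induced_C5_skip_two[OF C5, of 0, unfolded two] \<open>u \<noteq> w\<close>
      R_set_memD[OF u, of 0] R_set_memD[OF u, of 2] R_set_memD[OF w, of 0] R_set_memD[OF w, of 2]
    by simp
qed

lemma R_set_adjacent_X_j:
  assumes g: "graph V E" and free: "\<not> has_induced V E 4 fourK1" and C5: "induced_C5 V E c"
    and u: "u \<in> R_set V E c" and "j < 5" and x: "x \<in> X_j V E c j"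
  shows "E u x"
proof -
  define i where "i = (j + 2) mod 5"
  define k where "k = (i + 2) mod 5"
  have "j = 0 \<or> j = 1 \<or> j = 2 \<or> j = 3 \<or> j = 4"
    using \<open>j < 5\<close> by auto
  then have i: "i < 5" "k < 5" "i \<noteq> j mod 5" "i \<noteq> (j + 1) mod 5"
    "k \<noteq> j mod 5" "k \<noteq> (j + 1) mod 5"
    unfolding k_def i_def by auto
  have "u \<noteq> x"
    using R_set_memD(3)[OF u, of "j mod 5"] X_j_memD(3)[OF x, of "j mod 5"] by auto
  then show ?thesis
    using fourK1_free_adjacent[OF g free, of u x "c i" "c k"]
      induced_C5_skip_two[OF C5 i(1), folded k_def] i
      R_set_memD[OF u i(1)] R_set_memD[OF u i(2)] X_j_memD[OF x i(1)] X_j_memD[OF x i(2)]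
    by simp
qed

theorem mainTheorem12:
  fixes V :: "'a set" and E :: "'a \<Rightarrow> 'a \<Rightarrow> bool" and c :: "nat \<Rightarrow> 'a"
  assumes "in_class_C V E" and "connected_graph V E" and "induced_C5 V E c"
  shows "(\<forall>u\<in>R_set V E c. \<forall>w\<in>R_set V E c. u \<noteq> w \<longrightarrow> E u w)
       \<and> (\<forall>u\<in>R_set V E c. \<forall>x\<in>X_set V E c. E u x)"
proof -
  have g: "graph V E" and free: "\<not> has_induced V E 4 fourK1"
    using assms(1) unfolding in_class_C_def by auto
  show ?thesis
    using R_set_clique[OF g free assms(3)] R_set_adjacent_X_j[OF g free assms(3)]
    unfolding X_set_def by blast
qed

end
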